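(* If $G$ is a connected, claw-free cubic graph of order $n$, then $\sigma_{(3,q)}(G) = \beta(G)$ for every $q \in \mathbb{N}\cup\{\infty\}$ with $q\ge 2$.
   Context: A graph is claw-free if it has no induced subgraph isomorphic to $K_{1,3}$; it is cubic if every vertex has degree $3$. $\beta(G)$ denotes the vertex covering number (minimum size of a set of vertices meeting every edge). $(p,q)$-spreading: let $p\in\mathbb{N}$ and $q\in\mathbb{N}\cup\{\infty\}$. Start with a set $S\subseteq V(G)$ of blue vertices, all other vertices white. The color change rule: if a white vertex $w$ has at least $p$ blue neighbors, and at least one of the blue neighbors of $w$ has at most $q$ white neighbors, then $w$ is recolored blue. $S$ is a $(p,q)$-spreading set if repeatedly applying this rule eventually colors all vertices blue. $\sigma_{(p,q)}(G)$ is the minimum cardinality of a $(p,q)$-spreading set of $G$. *)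

theory Defs
  imports Main "HOL-Library.Extended_Nat"
begin

definition simple_graph :: "'a set \<Rightarrow> ('a \<Rightarrow> 'a \<Rightarrow> bool) \<Rightarrow> bool" where
  "simple_graph V E \<longleftrightarrow> finite V \<and> (\<forall>u v. E u v \<longrightarrow> u \<in> V \<and> v \<in> V)
     \<and> (\<forall>u v. E u v \<longrightarrow> E v u) \<and> (\<forall>v. \<not> E v v)"

definition nbrs :: "('a \<Rightarrow> 'a \<Rightarrow> bool) \<Rightarrow> 'a \<Rightarrow> 'a set" where
  "nbrs E v = {u. E v u}"

definition cubic :: "'a set \<Rightarrow> ('a \<Rightarrow> 'a \<Rightarrow> bool) \<Rightarrow> bool" where
  "cubic V E \<longleftrightarrow> (\<forall>v\<in>V. card (nbrs E v) = 3)"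

definition connected_graph :: "'a set \<Rightarrow> ('a \<Rightarrow> 'a \<Rightarrow> bool) \<Rightarrow> bool" where
  "connected_graph V E \<longleftrightarrow> V \<noteq> {} \<and> (\<forall>u\<in>V. \<forall>v\<in>V. E\<^sup>*\<^sup>* u v)"

definition claw_free :: "'a set \<Rightarrow> ('a \<Rightarrow> 'a \<Rightarrow> bool) \<Rightarrow> bool" where
  "claw_free V E \<longleftrightarrow> \<not> (\<exists>c\<in>V. \<exists>x y z. E c x \<and> E c y \<and> E c z
      \<and> x \<noteq> y \<and> x \<noteq> z \<and> y \<noteq> z \<and> \<not> E x y \<and> \<not> E x z \<and> \<not> E y z)"

definition vertex_cover :: "'a set \<Rightarrow> ('a \<Rightarrow> 'a \<Rightarrow> bool) \<Rightarrow> 'a set \<Rightarrow> bool" where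
  "vertex_cover V E C \<longleftrightarrow> C \<subseteq> V \<and> (\<forall>u v. E u v \<longrightarrow> u \<in> C \<or> v \<in> C)"

definition vertex_cover_number :: "'a set \<Rightarrow> ('a \<Rightarrow> 'a \<Rightarrow> bool) \<Rightarrow> nat" where
  "vertex_cover_number V E = (LEAST k. \<exists>C. vertex_cover V E C \<and> card C = k)"

text \<open>One round of the (p,q) color change rule applied simultaneously to all
  white vertices that are eligible given the current blue set B.  Since the rule is
  monotone in B, the order of application does not matter for the final colouring.
  q is in nat \<union> {\<infinity>}, modelled by enat.\<close>
definition spread_step :: "'a set \<Rightarrow> ('a \<Rightarrow> 'a \<Rightarrow> bool) \<Rightarrow> nat \<Rightarrow> enat \<Rightarrow> 'a set \<Rightarrow> 'a set" where
  "spread_step V E p q B = B \<union> {w \<in> V - B. p \<le> card (nbrs E w \<inter> B)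
      \<and> (\<exists>u \<in> nbrs E w \<inter> B. enat (card (nbrs E u - B)) \<le> q)}"

definition spreading_set :: "'a set \<Rightarrow> ('a \<Rightarrow> 'a \<Rightarrow> bool) \<Rightarrow> nat \<Rightarrow> enat \<Rightarrow> 'a set \<Rightarrow> bool" where
  "spreading_set V E p q S \<longleftrightarrow> S \<subseteq> V \<and> (\<exists>k. (spread_step V E p q ^^ k) S = V)"

definition spreading_number :: "'a set \<Rightarrow> ('a \<Rightarrow> 'a \<Rightarrow> bool) \<Rightarrow> nat \<Rightarrow> enat \<Rightarrow> nat" where
  "spreading_number V E p q = (LEAST k. \<exists>S. spreading_set V E p q S \<and> card S = k)"

end

theory Submission
  imports Defs
begin

text \<open>With p = 3 equal to the degree, a white vertex turns blue only when all its
  neighbours are blue, so an edge with two white endpoints stays white forever: every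
  (3,q)-spreading set is a vertex cover.  Conversely, starting from a vertex cover, every
  white vertex has three blue neighbours; by claw-freeness two of them, a and b, are
  adjacent, so a has at most two white neighbours and the white vertex turns blue in the
  first round.\<close>

lemma nbrs_subset_vertices:
  assumes "simple_graph V E"
  shows "nbrs E v \<subseteq> V"
  using assms unfolding simple_graph_def nbrs_def by blast

lemma finite_nbrs:
  assumes "simple_graph V E"
  shows "finite (nbrs E v)"
proof -
  have "finite V" using assms unfolding simple_graph_def by blast
  then show ?thesis using nbrs_subset_vertices[OF assms] by (rule finite_subset[rotated])
qed

lemma white_edge_stays_white:
  assumes sg: "simple_graph V E" and deg: "\<forall>v\<in>V. card (nbrs E v) \<le> p"
    and "E u v" "u \<notin> B" "v \<notin> B"
  shows "u \<notin> spread_step V E p q B"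
proof -
  have "u \<in> V" using sg \<open>E u v\<close> unfolding simple_graph_def by blast
  have "nbrs E u \<inter> B \<subset> nbrs E u"
    using \<open>E u v\<close> \<open>v \<notin> B\<close> unfolding nbrs_def by blast
  then have "card (nbrs E u \<inter> B) < card (nbrs E u)"
    using finite_nbrs[OF sg] by (rule psubset_card_mono[rotated])
  with deg \<open>u \<in> V\<close> have "\<not> p \<le> card (nbrs E u \<inter> B)" by fastforce
  with \<open>u \<notin> B\<close> show ?thesis unfolding spread_step_def by blast
qed

lemma white_edge_stays_white_funpow:
  assumes sg: "simple_graph V E" and deg: "\<forall>v\<in>V. card (nbrs E v) \<le> p"
    and uv: "E u v" "u \<notin> S" "v \<notin> S"
  shows "u \<notin> (spread_step V E p q ^^ k) S \<and> v \<notin> (spread_step V E p q ^^ k) S"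
proof (induction k)
  case 0
  show ?case using uv by simp
next
  case (Suc k)
  have "E v u" using sg \<open>E u v\<close> unfolding simple_graph_def by blast
  with Suc white_edge_stays_white[OF sg deg] uv show ?case by simp
qed

lemma spreading_set_imp_vertex_cover:
  assumes sg: "simple_graph V E" and deg: "\<forall>v\<in>V. card (nbrs E v) \<le> p"
    and "spreading_set V E p q S"
  shows "vertex_cover V E S"
proof -
  obtain k where "S \<subseteq> V" and k: "(spread_step V E p q ^^ k) S = V"
    using assms(3) unfolding spreading_set_def by blast
  have "u \<in> S \<or> v \<in> S" if "E u v" for u v
  proof -
    have "u \<in> V" using sg \<open>E u v\<close> unfolding simple_graph_def by blast
    then show ?thesis
      using white_edge_stays_white_funpow[OF sg deg \<open>E u v\<close>, where S=S and q=q and k=k] k by blast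
  qed
  with \<open>S \<subseteq> V\<close> show ?thesis unfolding vertex_cover_def by blast
qed

lemma claw_free_cubic_adjacent_nbrs:
  assumes "claw_free V E" "cubic V E" "w \<in> V"
  obtains a b where "a \<in> nbrs E w" "b \<in> nbrs E w" "E a b"
proof -
  obtain x y z where xyz: "nbrs E w = {x, y, z}" "x \<noteq> y" "y \<noteq> z" "x \<noteq> z"
    using assms(2,3) unfolding cubic_def by (auto simp: card_3_iff)
  then have "E w x" "E w y" "E w z" unfolding nbrs_def by blast+
  then have "E x y \<or> E x z \<or> E y z"
    using assms(1,3) xyz(2-4) unfolding claw_free_def by blast
  with xyz(1) that show ?thesis by blast
qed

lemma vertex_cover_spreads_in_one_step:
  assumes sg: "simple_graph V E" and cub: "cubic V E" and cf: "claw_free V E"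
    and q: "q \<ge> 2" and vc: "vertex_cover V E C"
  shows "spread_step V E 3 q C = V"
proof
  have "C \<subseteq> V" using vc unfolding vertex_cover_def by blast
  then show "spread_step V E 3 q C \<subseteq> V" unfolding spread_step_def by blast
next
  show "V \<subseteq> spread_step V E 3 q C"
  proof
    fix w assume "w \<in> V"
    show "w \<in> spread_step V E 3 q C"
    proof (cases "w \<in> C")
      case True
      then show ?thesis unfolding spread_step_def by blast
    next
      case False
      have blue: "nbrs E w \<subseteq> C"
        using vc False unfolding vertex_cover_def nbrs_def by blast
      have "card (nbrs E w) = 3" using cub \<open>w \<in> V\<close> unfolding cubic_def by blast
      with blue have three_blue: "3 \<le> card (nbrs E w \<inter> C)" by (simp add: Int_absorb2)
      obtain a b where ab: "a \<in> nbrs E w" "b \<in> nbrs E w" "E a b"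
        using claw_free_cubic_adjacent_nbrs[OF cf cub \<open>w \<in> V\<close>] .
      have "a \<in> V" using ab(1) nbrs_subset_vertices[OF sg] by blast
      have b_blue: "b \<in> nbrs E a \<inter> C" using ab blue by (auto simp: nbrs_def)
      have "card (nbrs E a - C) \<le> card (nbrs E a - {b})"
        using finite_nbrs[OF sg] b_blue by (intro card_mono) auto
      also have "\<dots> = 2"
        using cub \<open>a \<in> V\<close> b_blue finite_nbrs[OF sg] unfolding cubic_def by simp
      finally have "enat (card (nbrs E a - C)) \<le> 2" by (simp add: numeral_eq_enat)
      with q have "enat (card (nbrs E a - C)) \<le> q" by (rule order.trans[rotated])
      moreover have "a \<in> nbrs E w \<inter> C" using ab(1) blue by blast
      ultimately show ?thesis
        using \<open>w \<in> V\<close> False three_blue unfolding spread_step_def by blast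
    qed
  qed
qed

lemma spreading_set_iff_vertex_cover:
  assumes sg: "simple_graph V E" and cub: "cubic V E" and cf: "claw_free V E"
    and q: "q \<ge> 2"
  shows "spreading_set V E 3 q S \<longleftrightarrow> vertex_cover V E S"
proof
  have "\<forall>v\<in>V. card (nbrs E v) \<le> 3" using cub unfolding cubic_def by simp
  then show "spreading_set V E 3 q S \<Longrightarrow> vertex_cover V E S"
    using spreading_set_imp_vertex_cover[OF sg] by blast
next
  assume vc: "vertex_cover V E S"
  then have "(spread_step V E 3 q ^^ 1) S = V"
    using vertex_cover_spreads_in_one_step[OF sg cub cf q] by simp
  moreover have "S \<subseteq> V" using vc unfolding vertex_cover_def by blast
  ultimately show "spreading_set V E 3 q S" unfolding spreading_set_def by blast
qed

theorem proposition3p8: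
  fixes V :: "'a set" and E :: "'a \<Rightarrow> 'a \<Rightarrow> bool" and n :: nat and q :: enat
  assumes "simple_graph V E"
    and "connected_graph V E"
    and "claw_free V E"
    and "cubic V E"
    and "card V = n"
    and "q \<ge> 2"
  shows "spreading_number V E 3 q = vertex_cover_number V E"
  using spreading_set_iff_vertex_cover[OF assms(1,4,3,6)]
  unfolding spreading_number_def vertex_cover_number_def by simp

end
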